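(* Let $d\ge1$, $\sigma>0$, and let $A_0,A_1\in\mathbb{R}^{d\times d}$ be constant matrices. Let $G:[0,\infty)\to\mathbb{R}^{d\times d}$ be continuous with $A_1G(\vartheta)=G(\vartheta)A_1$ for all $\vartheta\ge0$, and let $\Psi:[-\sigma,0]\to\mathbb{R}^{d\times d}$ be differentiable with $A_1\Psi(\vartheta)=\Psi(\vartheta)A_1$ for all $\vartheta\in[-\sigma,0]$. Let $G^*(\vartheta)=G(0)$ for $\vartheta\in[-\sigma,0)$ and $G^*(\vartheta)=G(\vartheta)$ for $\vartheta\ge0$, and let $Z$ be the function defined in the context. Then the solution of \[ \dot X(\vartheta)=A_0X(\vartheta-\sigma)+X(\vartheta-\sigma)A_1+G(\vartheta),\ \ \vartheta\ge0,\qquad X(\vartheta)=\Psi(\vartheta),\ \ \vartheta\in[-\sigma,0], \] is given by \[ X(\vartheta)=Z(\vartheta)\Psi(-\sigma)+\int_{-\sigma}^{0}Z(\vartheta-\sigma-s)\dot\Psi(s)\,ds+\int_0^{\vartheta}Z(\vartheta-\sigma-s)G^*(s)\,ds,\qquad\vartheta\in[-\sigma,\infty). \]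
   Context: $\Theta$ and $I$ denote the $d\times d$ zero and identity matrices. Define matrices $Q_{r+1}(r\sigma)$, $r=0,1,2,\dots$, recursively by $Q_1(0)=I$ and $Q_{r+1}(r\sigma)=A_0Q_r((r-1)\sigma)+Q_r((r-1)\sigma)A_1$ for $r\ge 1$. Define $Z:\mathbb{R}\to\mathbb{R}^{d\times d}$ by $Z(\vartheta)=\Theta$ for $\vartheta<-\sigma$, and, for each integer $u\ge 0$ and $\vartheta\in[(u-1)\sigma,u\sigma)$, \[ Z(\vartheta)=\sum_{r=0}^{u}Q_{r+1}(r\sigma)\frac{(\vartheta-(r-1)\sigma)^r}{r!}. \] *)

theory Defs
  imports "HOL-Analysis.Analysis"
begin

text \<open>d x d real matrices are rendered as real^'d^'d (d = CARD('d) >= 1).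
  Qmat A0 A1 r is the matrix Q_{r+1}(r sigma) of the paper:
  Q_1(0) = I, Q_{r+1}(r sigma) = A0 Q_r((r-1) sigma) + Q_r((r-1) sigma) A1.\<close>

fun Qmat :: "real^'d^'d \<Rightarrow> real^'d^'d \<Rightarrow> nat \<Rightarrow> real^'d^'d" where
  "Qmat A0 A1 0 = mat 1"
| "Qmat A0 A1 (Suc r) = A0 ** Qmat A0 A1 r + Qmat A0 A1 r ** A1"

text \<open>Z(theta) = 0 for theta < -sigma; for theta in [(u-1) sigma, u sigma), u >= 0,
  Z(theta) = sum_{r=0}^u Q_{r+1}(r sigma) (theta - (r-1) sigma)^r / r!.
  The index u is floor(theta/sigma) + 1.\<close>

definition Zmat :: "real^'d^'d \<Rightarrow> real^'d^'d \<Rightarrow> real \<Rightarrow> real \<Rightarrow> real^'d^'d" where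
  "Zmat A0 A1 \<sigma> t =
     (if t < - \<sigma> then 0
      else (\<Sum>r = 0..nat (\<lfloor>t / \<sigma>\<rfloor> + 1).
              ((t - (real r - 1) * \<sigma>) ^ r / fact r) *\<^sub>R Qmat A0 A1 r))"

definition dde_solution ::
  "real^'d^'d \<Rightarrow> real^'d^'d \<Rightarrow> real \<Rightarrow> (real \<Rightarrow> real^'d^'d) \<Rightarrow> (real \<Rightarrow> real^'d^'d)
    \<Rightarrow> (real \<Rightarrow> real^'d^'d) \<Rightarrow> bool" where
  "dde_solution A0 A1 \<sigma> G \<Psi> X \<longleftrightarrow>
     (\<forall>t\<in>{-\<sigma>..0}. X t = \<Psi> t) \<and>
     (\<forall>t\<ge>0. (X has_vector_derivative
                   (A0 ** X (t - \<sigma>) + X (t - \<sigma>) ** A1 + G t)) (at t within {0..}))"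

end

theory Submission
  imports Defs
begin

text \<open>The function \<open>Z\<close> is built from the truncated powers \<open>(x)\<^sub>+\<^sup>r / r!\<close>, so that on matrices commuting
  with \<open>A\<^sub>1\<close>, such as the data \<open>\<Psi>\<close>, \<open>\<Psi>'\<close> and \<open>G\<close>, it acts as the operator kernel
  \<open>K(y) = \<Sum>\<^sub>r (y - (r - 1) \<sigma>)\<^sub>+\<^sup>r / r! L\<^sup>r\<close> with \<open>L M = A\<^sub>0 M + M A\<^sub>1\<close>. This kernel vanishes below \<open>-\<sigma>\<close>,
  is the identity at \<open>-\<sigma>\<close> and satisfies \<open>K'(y) = K(y - \<sigma>) L\<close> away from the grid points. Hence for
  any solution \<open>X\<close> the derivative of \<open>s \<mapsto> K(t - \<sigma> - s) X(s)\<close> is \<open>K(t - \<sigma> - s)\<close> applied to the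
  forcing term plus two delayed terms which cancel after the substitution \<open>s \<mapsto> s + \<sigma>\<close>; integrating
  over \<open>[-\<sigma>, t]\<close> gives the formula. Conversely, a solution exists by the method of steps, and
  since the formula determines it on \<open>[-\<sigma>, \<infinity>)\<close>, every function satisfying the formula is one.\<close>

lemma bounded_linear_funpow:
  fixes L :: "'a::real_normed_vector \<Rightarrow> 'a"
  assumes "bounded_linear L"
  shows "bounded_linear (L ^^ r)"
proof (induction r)
  case 0
  show ?case
    by (simp add: id_def bounded_linear_ident)
next
  case (Suc r)
  then show ?case
    by (simp add: bounded_linear_compose[OF assms])
qed

lemma has_integral_extend_vanishing:
  fixes f :: "real \<Rightarrow> 'a::banach"
  assumes f: "(f has_integral I) {a..b}" and "a \<le> c" "b \<le> c"
    and vanish: "\<And>s. s \<in> {a..c} \<Longrightarrow> b < s \<Longrightarrow> f s = 0"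
  shows "(f has_integral I) {a..c}"
proof (cases "a \<le> b")
  case True
  have "(f has_integral 0) {b..c}"
    by (rule has_integral_spike_finite[of "{b}", OF _ _ has_integral_0])
       (use vanish True in auto)
  from has_integral_combine[OF True \<open>b \<le> c\<close> f this] show ?thesis
    by simp
next
  case False
  then have "I = 0"
    using f by simp
  have "(f has_integral 0) {a..c}"
    by (rule has_integral_spike_finite[of "{a}", OF _ _ has_integral_0])
       (use vanish False in auto)
  with \<open>I = 0\<close> show ?thesis
    by simp
qed

lemma has_integral_split_vanishing:
  fixes f g h :: "real \<Rightarrow> 'a::banach"
  assumes f: "(f has_integral I) {a..c}" and "a \<le> b" "a \<le> c"
    and fg: "\<And>s. s \<in> {a..c} \<Longrightarrow> s \<le> b \<Longrightarrow> f s = g s"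
    and fh: "\<And>s. s \<in> {a..c} \<Longrightarrow> b < s \<Longrightarrow> f s = h s"
    and g: "\<And>s. s \<in> {a..b} \<Longrightarrow> c < s \<Longrightarrow> g s = 0"
    and h: "h integrable_on {b..c}"
  shows "I = integral {a..b} g + integral {b..c} h"
proof (cases "b \<le> c")
  case True
  have "f integrable_on {a..b}"
    by (rule integrable_subinterval_real[OF has_integral_integrable[OF f]]) (use True in auto)
  moreover have "integral {a..b} f = integral {a..b} g"
    by (rule integral_cong, rule fg) (use True in auto)
  ultimately have "(f has_integral integral {a..b} g) {a..b}"
    using integrable_integral by fastforce
  moreover have "(f has_integral integral {b..c} h) {b..c}"
    by (rule has_integral_spike_finite[of "{b}", OF _ _ integrable_integral[OF h]])
       (use fh \<open>a \<le> b\<close> in auto)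
  ultimately have "(f has_integral integral {a..b} g + integral {b..c} h) {a..c}"
    by (rule has_integral_combine[OF \<open>a \<le> b\<close> True])
  with f show ?thesis
    by (rule has_integral_unique)
next
  case False
  have "(g has_integral I) {a..c}"
    by (rule has_integral_eq[OF _ f]) (use fg False in auto)
  then have "(g has_integral I) {a..b}"
    by (rule has_integral_extend_vanishing) (use g False \<open>a \<le> b\<close> in auto)
  with False show ?thesis
    by (simp add: integral_unique)
qed

lemma integral_has_vector_derivative_atLeast:
  fixes f :: "real \<Rightarrow> 'a::banach"
  assumes f: "continuous_on {a..} f" and t: "a \<le> t"
  shows "((\<lambda>u. integral {a..u} f) has_vector_derivative f t) (at t within {a..})"
proof -
  have "((\<lambda>u. integral {a..u} f) has_vector_derivative f t) (at t within {a..t + 1})"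
    by (rule integral_has_vector_derivative) (use t in \<open>auto intro: continuous_on_subset[OF f]\<close>)
  moreover have "at t within {a..t + 1} = at t within {a..}"
    by (rule at_within_nhd[of _ "{..<t + 1}"]) auto
  ultimately show ?thesis
    by simp
qed

section \<open>Truncated powers and the delay kernel\<close>

definition trunc_pow :: "nat \<Rightarrow> real \<Rightarrow> real" where
  "trunc_pow r x = (if 0 \<le> x then x ^ r / fact r else 0)"

lemma trunc_pow_neg [simp]: "x < 0 \<Longrightarrow> trunc_pow r x = 0"
  by (simp add: trunc_pow_def)

lemma trunc_pow_below:
  assumes "0 \<le> \<sigma>" "y < - \<sigma>"
  shows "trunc_pow r (y - (real r - 1) * \<sigma>) = 0"
proof -
  have "0 \<le> real r * \<sigma>"
    using assms by simp
  moreover have "y - (real r - 1) * \<sigma> = (y + \<sigma>) - real r * \<sigma>"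
    by (simp add: algebra_simps)
  ultimately have "y - (real r - 1) * \<sigma> < 0"
    using assms by linarith
  then show ?thesis
    by simp
qed

lemma has_real_derivative_trunc_pow:
  assumes "x \<noteq> 0"
  shows "(trunc_pow r has_real_derivative (if r = 0 then 0 else trunc_pow (r - 1) x)) (at x)"
proof (cases "x > 0")
  case True
  have "((\<lambda>x. x ^ r / fact r) has_real_derivative (if r = 0 then 0 else trunc_pow (r - 1) x)) (at x)"
  proof (cases r)
    case (Suc k)
    have "((\<lambda>x. x ^ Suc k / fact (Suc k)) has_real_derivative real (Suc k) * x ^ k / fact (Suc k)) (at x)"
      using DERIV_cdivide[OF DERIV_pow[of "Suc k" x], of "fact (Suc k)"] by simp
    then show ?thesis
      using True Suc by (simp add: trunc_pow_def fact_Suc del: of_nat_Suc)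
  qed (auto intro!: derivative_eq_intros)
  then show ?thesis
    by (rule has_field_derivative_transform_within_open[of _ _ _ "{0<..}"])
       (use True in \<open>auto simp: trunc_pow_def\<close>)
next
  case False
  with assms have "x < 0" by simp
  then have "((\<lambda>_. 0) has_real_derivative (if r = 0 then 0 else trunc_pow (r - 1) x)) (at x)"
    by (auto intro!: derivative_eq_intros)
  then show ?thesis
    by (rule has_field_derivative_transform_within_open[of _ _ _ "{..<0}"])
       (use \<open>x < 0\<close> in auto)
qed

lemma continuous_on_trunc_pow: "continuous_on UNIV (trunc_pow (Suc r))"
proof -
  have "trunc_pow (Suc r) = (\<lambda>x. max x 0 ^ Suc r / fact (Suc r))"
    by (auto simp: trunc_pow_def fun_eq_iff max_def)
  then show ?thesis
    by (auto intro!: continuous_intros)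
qed

text \<open>The series is cut off after \<open>N\<close> terms; the omitted terms vanish below \<open>(N - 1) \<sigma>\<close>.\<close>

definition delay_kernel :: "('a \<Rightarrow> 'a) \<Rightarrow> real \<Rightarrow> nat \<Rightarrow> real \<Rightarrow> 'a \<Rightarrow> 'a::real_vector" where
  "delay_kernel L \<sigma> N y M = (\<Sum>r<N. trunc_pow r (y - (real r - 1) * \<sigma>) *\<^sub>R (L ^^ r) M)"

lemma delay_kernel_below:
  assumes "0 \<le> \<sigma>" "y < - \<sigma>"
  shows "delay_kernel L \<sigma> N y M = 0"
  using assms by (simp add: delay_kernel_def trunc_pow_below)

lemma delay_kernel_at_minus_delay:
  assumes "0 < \<sigma>" "0 < N"
  shows "delay_kernel L \<sigma> N (- \<sigma>) M = M"
proof -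
  have "trunc_pow r (- \<sigma> - (real r - 1) * \<sigma>) *\<^sub>R (L ^^ r) M = (if r = 0 then M else 0)" for r
  proof (cases r)
    case (Suc k)
    have "- \<sigma> - (real r - 1) * \<sigma> = - (real r * \<sigma>)"
      by (simp add: algebra_simps)
    with assms Suc have "- \<sigma> - (real r - 1) * \<sigma> < 0"
      by simp
    with Suc show ?thesis
      by simp
  qed (simp add: trunc_pow_def)
  with assms show ?thesis
    by (simp add: delay_kernel_def)
qed

lemma bounded_linear_delay_kernel:
  "bounded_linear L \<Longrightarrow> bounded_linear (delay_kernel L \<sigma> N y)"
  unfolding delay_kernel_def
  by (intro bounded_linear_sum bounded_linear_compose[OF bounded_linear_scaleR_right]
      bounded_linear_funpow)

text \<open>Differentiating the truncated powers lowers every index by one, which is the same as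
  shifting the argument by \<open>\<sigma>\<close> and applying \<open>L\<close> once more; the last term of the shifted sum
  vanishes below \<open>(N - 1) \<sigma>\<close>.\<close>

lemma delay_kernel_derivative_sum:
  assumes "y < (real N - 1) * \<sigma>"
  shows "(\<Sum>r<N. (if r = 0 then 0 else trunc_pow (r - 1) (y - (real r - 1) * \<sigma>)) *\<^sub>R (L ^^ r) M)
    = delay_kernel L \<sigma> N (y - \<sigma>) (L M)"
proof (cases N)
  case (Suc n)
  have "(\<Sum>r<N. (if r = 0 then 0 else trunc_pow (r - 1) (y - (real r - 1) * \<sigma>)) *\<^sub>R (L ^^ r) M)
      = (\<Sum>r<n. trunc_pow r (y - \<sigma> - (real r - 1) * \<sigma>) *\<^sub>R (L ^^ r) (L M))"
    unfolding Suc sum.lessThan_Suc_shift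
    by (simp add: algebra_simps funpow_Suc_right del: funpow.simps)
  also have "\<dots> = delay_kernel L \<sigma> N (y - \<sigma>) (L M)"
    using assms by (simp add: delay_kernel_def Suc algebra_simps)
  finally show ?thesis .
qed (simp add: delay_kernel_def)

lemma delay_kernel_has_vector_derivative:
  assumes L: "bounded_linear L" and F: "(F has_vector_derivative F') (at s)"
    and below: "c - s < (real N - 1) * \<sigma>"
    and off_grid: "\<And>r. r < N \<Longrightarrow> c - s \<noteq> (real r - 1) * \<sigma>"
  shows "((\<lambda>s. delay_kernel L \<sigma> N (c - s) (F s)) has_vector_derivative
           delay_kernel L \<sigma> N (c - s) F' - delay_kernel L \<sigma> N (c - s - \<sigma>) (L (F s))) (at s)"
proof -
  let ?x = "\<lambda>r s. c - s - (real r - 1) * \<sigma>"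
  let ?d = "\<lambda>r. if r = 0 then 0 else trunc_pow (r - 1) (?x r s)"
  have "((\<lambda>s. trunc_pow r (?x r s) *\<^sub>R (L ^^ r) (F s)) has_vector_derivative
      trunc_pow r (?x r s) *\<^sub>R (L ^^ r) F' + (- ?d r) *\<^sub>R (L ^^ r) (F s)) (at s)" if "r < N" for r
  proof (rule has_vector_derivative_scaleR)
    have "?x r s \<noteq> 0"
      using off_grid[OF that] by simp
    moreover have "((\<lambda>s. ?x r s) has_real_derivative -1) (at s)"
      by (auto intro!: derivative_eq_intros)
    ultimately have "((\<lambda>s. trunc_pow r (?x r s)) has_real_derivative ?d r * -1) (at s)"
      by (rule DERIV_chain2[OF has_real_derivative_trunc_pow])
    then show "((\<lambda>s. trunc_pow r (?x r s)) has_real_derivative - ?d r) (at s)"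
      by simp
    show "((\<lambda>s. (L ^^ r) (F s)) has_vector_derivative (L ^^ r) F') (at s)"
      by (rule bounded_linear.has_vector_derivative[OF bounded_linear_funpow[OF L] F])
  qed
  then have "((\<lambda>s. delay_kernel L \<sigma> N (c - s) (F s)) has_vector_derivative
      (\<Sum>r<N. trunc_pow r (?x r s) *\<^sub>R (L ^^ r) F' + (- ?d r) *\<^sub>R (L ^^ r) (F s))) (at s)"
    unfolding delay_kernel_def by (intro has_vector_derivative_sum) auto
  also have "(\<Sum>r<N. trunc_pow r (?x r s) *\<^sub>R (L ^^ r) F' + (- ?d r) *\<^sub>R (L ^^ r) (F s))
      = delay_kernel L \<sigma> N (c - s) F' - delay_kernel L \<sigma> N (c - s - \<sigma>) (L (F s))"
    using delay_kernel_derivative_sum[OF below, of L "F s"]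
    by (simp add: delay_kernel_def sum_subtractf)
  finally show ?thesis .
qed

lemma continuous_on_delay_kernel:
  assumes L: "bounded_linear L" and g: "continuous_on S g" and F: "continuous_on S F"
    and above: "\<And>s. s \<in> S \<Longrightarrow> - \<sigma> \<le> g s"
  shows "continuous_on S (\<lambda>s. delay_kernel L \<sigma> N (g s) (F s))"
  unfolding delay_kernel_def
proof (intro continuous_on_sum continuous_on_scaleR)
  fix r
  show "continuous_on S (\<lambda>s. (L ^^ r) (F s))"
    by (rule bounded_linear.continuous_on[OF bounded_linear_funpow[OF L] F])
  show "continuous_on S (\<lambda>s. trunc_pow r (g s - (real r - 1) * \<sigma>))"
  proof (cases r)
    case 0
    show ?thesis
      by (rule continuous_on_eq[OF continuous_on_const[of S 1]])
         (use 0 above in \<open>force simp: trunc_pow_def\<close>)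
  next
    case (Suc k)
    show ?thesis
      unfolding Suc
      by (rule continuous_on_compose2[OF continuous_on_trunc_pow[of k]])
         (use Suc in \<open>auto intro!: continuous_intros g\<close>)
  qed
qed

lemma continuous_on_delay_kernel_convolution:
  assumes L: "bounded_linear L" and F: "continuous_on {0..t} F"
  shows "continuous_on {0..t} (\<lambda>s. delay_kernel L \<sigma> N (t - \<sigma> - s) (F s))"
  by (rule continuous_on_delay_kernel[OF L _ F]) (auto intro!: continuous_intros)

text \<open>Variation of constants: along \<open>s \<mapsto> K (t - \<sigma> - s) (X s)\<close> the kernel absorbs the delayed term
  of the equation, and the endpoints give \<open>X t\<close> and \<open>K t (X (-\<sigma>))\<close>.\<close>

lemma delay_kernel_variation_of_constants:
  fixes X D :: "real \<Rightarrow> 'a::banach"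
  assumes L: "bounded_linear L" and \<sigma>: "0 < \<sigma>"
    and t: "- \<sigma> \<le> t" "t < (real N - 1) * \<sigma>"
    and X: "continuous_on {-\<sigma>..t} X" and S: "finite S"
    and D: "\<And>s. s \<in> {-\<sigma><..<t} - S \<Longrightarrow> (X has_vector_derivative D s) (at s)"
  shows "((\<lambda>s. delay_kernel L \<sigma> N (t - \<sigma> - s) (D s) - delay_kernel L \<sigma> N (t - \<sigma> - s - \<sigma>) (L (X s)))
           has_integral X t - delay_kernel L \<sigma> N t (X (- \<sigma>))) {-\<sigma>..t}"
proof -
  let ?K = "delay_kernel L \<sigma> N"
  define B where "B = S \<union> (\<lambda>r. t - \<sigma> - (real r - 1) * \<sigma>) ` {..<N}"
  have "((\<lambda>s. ?K (t - \<sigma> - s) (D s) - ?K (t - \<sigma> - s - \<sigma>) (L (X s)))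
           has_integral ?K (t - \<sigma> - t) (X t) - ?K (t - \<sigma> - - \<sigma>) (X (- \<sigma>))) {-\<sigma>..t}"
  proof (rule fundamental_theorem_of_calculus_interior_strong[of B])
    show "finite B"
      using S by (simp add: B_def)
    show "- \<sigma> \<le> t"
      by fact
    show "continuous_on {-\<sigma>..t} (\<lambda>s. ?K (t - \<sigma> - s) (X s))"
      by (rule continuous_on_delay_kernel[OF L _ X]) (auto intro!: continuous_intros)
    fix s
    assume s: "s \<in> {-\<sigma><..<t} - B"
    show "((\<lambda>s. ?K (t - \<sigma> - s) (X s)) has_vector_derivative
            ?K (t - \<sigma> - s) (D s) - ?K (t - \<sigma> - s - \<sigma>) (L (X s))) (at s)"
    proof (rule delay_kernel_has_vector_derivative[OF L D])
      show "s \<in> {-\<sigma><..<t} - S" "t - \<sigma> - s < (real N - 1) * \<sigma>"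
        using s t by (auto simp: B_def)
      fix r
      assume "r < N"
      then have "s \<noteq> t - \<sigma> - (real r - 1) * \<sigma>"
        using s by (auto simp: B_def)
      then show "t - \<sigma> - s \<noteq> (real r - 1) * \<sigma>"
        by simp
    qed
  qed
  moreover have "0 < N"
    using t \<sigma> by (cases N) auto
  ultimately show ?thesis
    by (simp add: delay_kernel_at_minus_delay[OF \<sigma>])
qed

text \<open>The delayed term, integrated against the kernel over \<open>[0, t]\<close>, becomes after the substitution
  \<open>s \<mapsto> s + \<sigma>\<close> an integral over \<open>[-\<sigma>, t - \<sigma>]\<close>; on \<open>]t - \<sigma>, t]\<close> the kernel vanishes.\<close>

lemma has_integral_delay_kernel_delayed:
  fixes X :: "real \<Rightarrow> 'a::banach"
  assumes L: "bounded_linear L" and \<sigma>: "0 < \<sigma>" and t: "- \<sigma> \<le> t"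
    and X: "continuous_on {-\<sigma>..} X"
  shows "((\<lambda>s. delay_kernel L \<sigma> N (t - \<sigma> - s - \<sigma>) (L (X s))) has_integral
           integral {0..t} (\<lambda>s. delay_kernel L \<sigma> N (t - \<sigma> - s) (L (X (s - \<sigma>))))) {-\<sigma>..t}"
proof -
  let ?g = "\<lambda>s. delay_kernel L \<sigma> N (t - \<sigma> - s) (L (X (s - \<sigma>)))"
  have "continuous_on {0..t} (\<lambda>s. L (X (s - \<sigma>)))"
    by (intro bounded_linear.continuous_on[OF L] continuous_on_compose2[OF X])
       (auto intro!: continuous_intros)
  then have "continuous_on {0..t} ?g"
    by (rule continuous_on_delay_kernel_convolution[OF L])
  then have "(?g has_integral integral {0..t} ?g) {0..t}"
    by (rule integrable_integral[OF integrable_continuous_interval])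
  from has_integral_shift_real_ivl[OF this, of \<sigma>]
  have "((\<lambda>s. delay_kernel L \<sigma> N (t - \<sigma> - s - \<sigma>) (L (X s))) has_integral integral {0..t} ?g)
          {-\<sigma>..t - \<sigma>}"
    by (simp add: algebra_simps)
  then show ?thesis
    by (rule has_integral_extend_vanishing) (use t \<sigma> in \<open>auto intro!: delay_kernel_below\<close>)
qed

section \<open>Linear delay equations in Banach spaces\<close>

definition delay_solution ::
  "('a \<Rightarrow> 'a) \<Rightarrow> real \<Rightarrow> (real \<Rightarrow> 'a) \<Rightarrow> (real \<Rightarrow> 'a) \<Rightarrow> (real \<Rightarrow> 'a::real_normed_vector) \<Rightarrow> bool"
  where "delay_solution L \<sigma> G \<Psi> X \<longleftrightarrow>
    (\<forall>t\<in>{-\<sigma>..0}. X t = \<Psi> t) \<and>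
    (\<forall>t\<ge>0. (X has_vector_derivative L (X (t - \<sigma>)) + G t) (at t within {0..}))"

lemma delay_solution_cong:
  assumes Y: "delay_solution L \<sigma> G \<Psi> Y" and \<sigma>: "0 \<le> \<sigma>" and XY: "\<And>t. - \<sigma> \<le> t \<Longrightarrow> X t = Y t"
  shows "delay_solution L \<sigma> G \<Psi> X"
  unfolding delay_solution_def
proof (intro conjI allI impI ballI)
  fix t :: real
  assume "t \<in> {-\<sigma>..0}"
  with Y XY show "X t = \<Psi> t"
    by (simp add: delay_solution_def)
next
  fix t :: real
  assume t: "0 \<le> t"
  with Y XY have "(Y has_vector_derivative L (X (t - \<sigma>)) + G t) (at t within {0..})"
    by (simp add: delay_solution_def)
  then show "(X has_vector_derivative L (X (t - \<sigma>)) + G t) (at t within {0..})"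
    by (rule has_vector_derivative_transform_within[of _ _ _ _ 1]) (use t \<sigma> XY in auto)
qed

locale delay_equation =
  fixes L :: "'a::banach \<Rightarrow> 'a" and \<sigma> :: real and G \<Psi> :: "real \<Rightarrow> 'a"
  assumes bounded_linear_L: "bounded_linear L"
    and delay_pos: "0 < \<sigma>"
    and continuous_G: "continuous_on {0..} G"
    and continuous_\<Psi>: "continuous_on {-\<sigma>..0} \<Psi>"
begin

lemma continuous_on_solution:
  assumes X: "delay_solution L \<sigma> G \<Psi> X"
  shows "continuous_on {-\<sigma>..} X"
proof -
  have "continuous_on {-\<sigma>..0} X"
    by (rule continuous_on_eq[OF continuous_\<Psi>]) (use X in \<open>auto simp: delay_solution_def\<close>)
  moreover have "continuous_on {0..} X"
    unfolding continuous_on_eq_continuous_within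
  proof
    fix t :: real
    assume "t \<in> {0..}"
    with X have "(X has_vector_derivative L (X (t - \<sigma>)) + G t) (at t within {0..})"
      by (simp add: delay_solution_def)
    then show "continuous (at t within {0..}) X"
      by (rule has_vector_derivative_continuous)
  qed
  ultimately have "continuous_on ({-\<sigma>..0} \<union> {0..}) X"
    by (intro continuous_on_closed_Un) auto
  moreover have "{-\<sigma>..0} \<union> {0..} = {-\<sigma>..}"
    using delay_pos by auto
  ultimately show ?thesis
    by simp
qed

lemma solution_has_vector_derivative:
  assumes X: "delay_solution L \<sigma> G \<Psi> X"
    and \<Psi>': "\<And>s. s \<in> {-\<sigma>..0} \<Longrightarrow> (\<Psi> has_vector_derivative \<Psi>' s) (at s within {-\<sigma>..0})"
    and s: "s \<in> {-\<sigma><..} - {0}"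
  shows "(X has_vector_derivative (if s \<le> 0 then \<Psi>' s else L (X (s - \<sigma>)) + G s)) (at s)"
proof (cases "s < 0")
  case True
  with s have "(\<Psi> has_vector_derivative \<Psi>' s) (at s within {-\<sigma>..0})"
    by (intro \<Psi>') auto
  moreover have "at s within {-\<sigma>..0} = at s"
    using s True by (intro at_within_interior) auto
  ultimately have "(\<Psi> has_vector_derivative \<Psi>' s) (at s)"
    by simp
  then have "(X has_vector_derivative \<Psi>' s) (at s)"
    by (rule has_vector_derivative_transform_within_open[of _ _ _ "{-\<sigma><..<0}"])
       (use s True X in \<open>auto simp: delay_solution_def\<close>)
  with True show ?thesis
    by simp
next
  case False
  with s have "0 < s"
    by auto
  with X have "(X has_vector_derivative L (X (s - \<sigma>)) + G s) (at s within {0..})"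
    by (simp add: delay_solution_def)
  moreover have "at s within {0..} = at s"
    using \<open>0 < s\<close> by (intro at_within_interior) auto
  ultimately show ?thesis
    using \<open>0 < s\<close> by simp
qed

lemma solution_has_integral_kernel_derivative:
  assumes X: "delay_solution L \<sigma> G \<Psi> X"
    and \<Psi>': "\<And>s. s \<in> {-\<sigma>..0} \<Longrightarrow> (\<Psi> has_vector_derivative \<Psi>' s) (at s within {-\<sigma>..0})"
    and t: "- \<sigma> \<le> t" "t < (real N - 1) * \<sigma>"
  shows "((\<lambda>s. delay_kernel L \<sigma> N (t - \<sigma> - s) (if s \<le> 0 then \<Psi>' s else L (X (s - \<sigma>)) + G s))
    has_integral X t - delay_kernel L \<sigma> N t (\<Psi> (- \<sigma>))
      + integral {0..t} (\<lambda>s. delay_kernel L \<sigma> N (t - \<sigma> - s) (L (X (s - \<sigma>))))) {-\<sigma>..t}"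
proof -
  let ?K = "delay_kernel L \<sigma> N"
  let ?D = "\<lambda>s. if s \<le> 0 then \<Psi>' s else L (X (s - \<sigma>)) + G s"
  have Xc: "continuous_on {-\<sigma>..} X"
    by (rule continuous_on_solution[OF X])
  have "((\<lambda>s. ?K (t - \<sigma> - s) (?D s) - ?K (t - \<sigma> - s - \<sigma>) (L (X s)))
          has_integral X t - ?K t (X (- \<sigma>))) {-\<sigma>..t}"
  proof (rule delay_kernel_variation_of_constants[OF bounded_linear_L delay_pos t])
    show "continuous_on {-\<sigma>..t} X"
      by (rule continuous_on_subset[OF Xc]) auto
    show "(X has_vector_derivative ?D s) (at s)" if "s \<in> {-\<sigma><..<t} - {0}" for s
      using that by (intro solution_has_vector_derivative[OF X \<Psi>']) auto
  qed simp
  from has_integral_add[OF this has_integral_delay_kernel_delayed[where N = N, OF bounded_linear_L delay_pos t(1) Xc]]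
  have "((\<lambda>s. ?K (t - \<sigma> - s) (?D s)) has_integral X t - ?K t (X (- \<sigma>))
      + integral {0..t} (\<lambda>s. ?K (t - \<sigma> - s) (L (X (s - \<sigma>))))) {-\<sigma>..t}"
    by simp
  moreover have "X (- \<sigma>) = \<Psi> (- \<sigma>)"
    using X delay_pos by (simp add: delay_solution_def)
  ultimately show ?thesis
    by simp
qed

theorem delay_solution_representation:
  assumes X: "delay_solution L \<sigma> G \<Psi> X"
    and \<Psi>': "\<And>s. s \<in> {-\<sigma>..0} \<Longrightarrow> (\<Psi> has_vector_derivative \<Psi>' s) (at s within {-\<sigma>..0})"
    and t: "- \<sigma> \<le> t" "t < (real N - 1) * \<sigma>"
  shows "X t = delay_kernel L \<sigma> N t (\<Psi> (- \<sigma>))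
    + integral {-\<sigma>..0} (\<lambda>s. delay_kernel L \<sigma> N (t - \<sigma> - s) (\<Psi>' s))
    + integral {0..t} (\<lambda>s. delay_kernel L \<sigma> N (t - \<sigma> - s) (G s))"
proof -
  let ?K = "delay_kernel L \<sigma> N"
  let ?J = "integral {0..t} (\<lambda>s. ?K (t - \<sigma> - s) (L (X (s - \<sigma>))))"
  have "continuous_on {0..t} (\<lambda>s. L (X (s - \<sigma>)))"
    by (intro bounded_linear.continuous_on[OF bounded_linear_L]
        continuous_on_compose2[OF continuous_on_solution[OF X]]) (auto intro!: continuous_intros)
  then have delayed: "continuous_on {0..t} (\<lambda>s. ?K (t - \<sigma> - s) (L (X (s - \<sigma>))))"
    by (rule continuous_on_delay_kernel_convolution[OF bounded_linear_L])
  have forcing: "continuous_on {0..t} (\<lambda>s. ?K (t - \<sigma> - s) (G s))"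
    by (intro continuous_on_delay_kernel_convolution[OF bounded_linear_L]
        continuous_on_subset[OF continuous_G]) auto
  have "X t - ?K t (\<Psi> (- \<sigma>)) + ?J = integral {-\<sigma>..0} (\<lambda>s. ?K (t - \<sigma> - s) (\<Psi>' s))
      + integral {0..t} (\<lambda>s. ?K (t - \<sigma> - s) (L (X (s - \<sigma>))) + ?K (t - \<sigma> - s) (G s))"
  proof (rule has_integral_split_vanishing[OF solution_has_integral_kernel_derivative[OF X \<Psi>' t]])
    show "(\<lambda>s. ?K (t - \<sigma> - s) (L (X (s - \<sigma>))) + ?K (t - \<sigma> - s) (G s)) integrable_on {0..t}"
      by (intro integrable_add integrable_continuous_interval delayed forcing)
    show "?K (t - \<sigma> - s) (if s \<le> 0 then \<Psi>' s else L (X (s - \<sigma>)) + G s)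
      = ?K (t - \<sigma> - s) (L (X (s - \<sigma>))) + ?K (t - \<sigma> - s) (G s)" if "0 < s" for s
      using that by (simp add: linear_add[OF bounded_linear.linear[OF bounded_linear_delay_kernel[OF bounded_linear_L]]])
    show "?K (t - \<sigma> - s) (\<Psi>' s) = 0" if "t < s" for s
      using that delay_pos by (intro delay_kernel_below) auto
  qed (use t delay_pos in auto)
  also have "\<dots> = integral {-\<sigma>..0} (\<lambda>s. ?K (t - \<sigma> - s) (\<Psi>' s)) + ?J
      + integral {0..t} (\<lambda>s. ?K (t - \<sigma> - s) (G s))"
    by (simp add: integral_add integrable_continuous_interval delayed forcing)
  finally show ?thesis
    by (simp add: algebra_simps)
qed

text \<open>The method of steps: one application of \<open>steps_map\<close> integrates the equation with the delayed
  term taken from \<open>X\<close>, so the \<open>n\<close>-th iterate solves it on \<open>[-\<sigma>, n \<sigma>]\<close>.\<close>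

definition steps_map :: "(real \<Rightarrow> 'a) \<Rightarrow> real \<Rightarrow> 'a" where
  "steps_map X t =
    (if t \<le> 0 then \<Psi> (max (- \<sigma>) t) else \<Psi> 0 + integral {0..t} (\<lambda>s. L (X (s - \<sigma>)) + G s))"

definition steps :: "nat \<Rightarrow> real \<Rightarrow> 'a" where
  "steps n = (steps_map ^^ n) (\<lambda>t. \<Psi> (max (- \<sigma>) (min t 0)))"

lemma steps_Suc: "steps (Suc n) = steps_map (steps n)"
  by (simp add: steps_def)

lemma steps_map_has_vector_derivative:
  assumes X: "continuous_on {-\<sigma>..} X" and t: "0 \<le> t"
  shows "(steps_map X has_vector_derivative L (X (t - \<sigma>)) + G t) (at t within {0..})"
proof -
  have "continuous_on {0..} (\<lambda>s. L (X (s - \<sigma>)) + G s)"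
    by (intro continuous_on_add continuous_G bounded_linear.continuous_on[OF bounded_linear_L]
        continuous_on_compose2[OF X]) (auto intro!: continuous_intros)
  from has_vector_derivative_add[OF has_vector_derivative_const
      integral_has_vector_derivative_atLeast[OF this t]]
  have "((\<lambda>u. \<Psi> 0 + integral {0..u} (\<lambda>s. L (X (s - \<sigma>)) + G s)) has_vector_derivative
          L (X (t - \<sigma>)) + G t) (at t within {0..})"
    by simp
  then show ?thesis
    by (rule has_vector_derivative_transform_within[of _ _ _ _ 1])
       (use t delay_pos in \<open>auto simp: steps_map_def\<close>)
qed

lemma continuous_steps_map:
  assumes X: "continuous_on {-\<sigma>..} X"
  shows "continuous_on UNIV (steps_map X)"
proof -
  have "continuous_on {..0} (\<lambda>t. \<Psi> (max (- \<sigma>) t))"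
    by (rule continuous_on_compose2[OF continuous_\<Psi>]) (use delay_pos in \<open>auto intro!: continuous_intros\<close>)
  then have "continuous_on {..0} (steps_map X)"
    by (rule continuous_on_eq) (simp add: steps_map_def)
  moreover have "continuous_on {0..} (steps_map X)"
    unfolding continuous_on_eq_continuous_within
    using steps_map_has_vector_derivative[OF X] has_vector_derivative_continuous by blast
  ultimately have "continuous_on ({..0} \<union> {0..}) (steps_map X)"
    by (intro continuous_on_closed_Un) auto
  moreover have "{..0} \<union> {0..} = (UNIV :: real set)"
    by auto
  ultimately show ?thesis
    by simp
qed

lemma continuous_steps: "continuous_on UNIV (steps n)"
proof (induction n)
  case 0
  show ?case
    unfolding steps_def
    by (simp, rule continuous_on_compose2[OF continuous_\<Psi>])
       (use delay_pos in \<open>auto intro!: continuous_intros\<close>)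
next
  case (Suc n)
  then show ?case
    by (simp add: steps_Suc continuous_steps_map continuous_on_subset)
qed

lemma steps_map_cong:
  assumes "\<And>s. s \<le> t - \<sigma> \<Longrightarrow> X s = Y s"
  shows "steps_map X t = steps_map Y t"
  unfolding steps_map_def using assms by (auto intro!: integral_cong)

lemma steps_Suc_eq: "t \<le> real n * \<sigma> \<Longrightarrow> steps (Suc n) t = steps n t"
proof (induction n arbitrary: t)
  case 0
  then show ?case
    by (simp add: steps_def steps_map_def)
next
  case (Suc n)
  have "steps_map (steps (Suc n)) t = steps_map (steps n) t"
    by (rule steps_map_cong) (use Suc in \<open>auto simp: algebra_simps\<close>)
  then show ?case
    by (simp add: steps_Suc)
qed

lemma steps_eq:
  assumes "n \<le> m" "t \<le> real n * \<sigma>"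
  shows "steps m t = steps n t"
  using assms(1)
proof (induction m rule: dec_induct)
  case (step m)
  have "real n * \<sigma> \<le> real m * \<sigma>"
    using step(1) delay_pos by (simp add: mult_right_mono)
  with assms(2) step show ?case
    by (simp add: steps_Suc_eq)
qed simp

theorem delay_solution_exists: "\<exists>X. delay_solution L \<sigma> G \<Psi> X"
proof
  define k where "k t = nat \<lceil>t / \<sigma>\<rceil>" for t
  define X where "X t = steps (k t) t" for t
  have k: "t \<le> real (k t) * \<sigma>" for t
  proof -
    have "t / \<sigma> \<le> real (k t)"
      unfolding k_def by linarith
    then show ?thesis
      using delay_pos by (simp add: pos_divide_le_eq)
  qed
  have X_steps: "X t = steps m t" if "t \<le> real m * \<sigma>" for t m
  proof -
    have "t / \<sigma> \<le> real m"
      using that delay_pos by (simp add: pos_divide_le_eq)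
    then have "k t \<le> m"
      unfolding k_def by linarith
    with k show ?thesis
      unfolding X_def by (intro steps_eq[symmetric])
  qed
  show "delay_solution L \<sigma> G \<Psi> X"
    unfolding delay_solution_def
  proof (intro conjI ballI allI impI)
    fix t
    assume "t \<in> {-\<sigma>..0}"
    then show "X t = \<Psi> t"
      using X_steps[of t 0] by (simp add: steps_def)
  next
    fix t :: real
    assume t: "0 \<le> t"
    have "(steps (Suc (k t)) has_vector_derivative L (steps (k t) (t - \<sigma>)) + G t) (at t within {0..})"
      unfolding steps_Suc
      by (rule steps_map_has_vector_derivative[OF continuous_on_subset[OF continuous_steps] t]) simp
    moreover have "X (t - \<sigma>) = steps (k t) (t - \<sigma>)"
      using k[of t] delay_pos by (intro X_steps) linarith
    ultimately have "(steps (Suc (k t)) has_vector_derivative L (X (t - \<sigma>)) + G t) (at t within {0..})"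
      by simp
    then show "(X has_vector_derivative L (X (t - \<sigma>)) + G t) (at t within {0..})"
    proof (rule has_vector_derivative_transform_within[OF _ delay_pos])
      fix u
      assume "u \<in> {0..}" "dist u t < \<sigma>"
      then have "u \<le> real (Suc (k t)) * \<sigma>"
        using k[of t] by (simp add: dist_real_def algebra_simps)
      then show "steps (Suc (k t)) u = X u"
        by (rule X_steps[symmetric])
    qed (use t in simp)
  qed
qed

end

section \<open>The matrix equation\<close>

lemma bounded_bilinear_matrix_matrix_mult:
  "bounded_bilinear ((**) :: real^'n^'m \<Rightarrow> real^'k^'n \<Rightarrow> real^'k^'m)"
  unfolding bilinear_conv_bounded_bilinear[symmetric] bilinear_def
  by (auto intro!: linearI
      simp: matrix_matrix_mult_def vec_eq_iff sum.distrib sum_distrib_left algebra_simps)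

lemmas matrix_mult_bounded_linear_left =
    bounded_bilinear.bounded_linear_left[OF bounded_bilinear_matrix_matrix_mult]
  and matrix_mult_bounded_linear_right =
    bounded_bilinear.bounded_linear_right[OF bounded_bilinear_matrix_matrix_mult]

definition sylvester :: "real^'m^'m \<Rightarrow> real^'n^'n \<Rightarrow> real^'n^'m \<Rightarrow> real^'n^'m" where
  "sylvester A B M = A ** M + M ** B"

lemma bounded_linear_sylvester: "bounded_linear (sylvester A B)"
  unfolding sylvester_def
  by (intro bounded_linear_add matrix_mult_bounded_linear_left matrix_mult_bounded_linear_right)

lemma Qmat_mult_commuting:
  assumes "A1 ** M = M ** A1"
  shows "Qmat A0 A1 r ** M = (sylvester A0 A1 ^^ r) M"
proof (induction r)
  case (Suc r)
  have "Qmat A0 A1 (Suc r) ** M = A0 ** (Qmat A0 A1 r ** M) + (Qmat A0 A1 r ** M) ** A1"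
    by (simp add: bounded_bilinear.add_left[OF bounded_bilinear_matrix_matrix_mult]
        matrix_mul_assoc[symmetric] assms)
  with Suc show ?case
    by (simp add: sylvester_def)
qed simp

lemma Zmat_eq_trunc_pow_sum:
  assumes \<sigma>: "0 < \<sigma>" and y: "y < (real N - 1) * \<sigma>"
  shows "Zmat A0 A1 \<sigma> y = (\<Sum>r<N. trunc_pow r (y - (real r - 1) * \<sigma>) *\<^sub>R Qmat A0 A1 r)"
proof (cases "y < - \<sigma>")
  case True
  with \<sigma> show ?thesis
    by (simp add: Zmat_def trunc_pow_below)
next
  case False
  define K where "K = nat (\<lfloor>y / \<sigma>\<rfloor> + 1)"
  have K: "r \<le> K \<longleftrightarrow> 0 \<le> y - (real r - 1) * \<sigma>" for r
  proof -
    have "- 1 \<le> y / \<sigma>"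
      using False \<sigma> by (simp add: pos_le_divide_eq)
    then have "r \<le> K \<longleftrightarrow> real r - 1 \<le> y / \<sigma>"
      unfolding K_def by linarith
    also have "\<dots> \<longleftrightarrow> 0 \<le> y - (real r - 1) * \<sigma>"
      using \<sigma> by (simp add: pos_le_divide_eq)
    finally show ?thesis .
  qed
  have "(real K - 1) * \<sigma> < (real N - 1) * \<sigma>"
    using K[of K] y by simp
  then have "K < N"
    using \<sigma> by simp
  have "Zmat A0 A1 \<sigma> y = (\<Sum>r\<in>{0..K}. trunc_pow r (y - (real r - 1) * \<sigma>) *\<^sub>R Qmat A0 A1 r)"
    using False K by (simp add: Zmat_def K_def[symmetric] trunc_pow_def)
  also have "\<dots> = (\<Sum>r<N. trunc_pow r (y - (real r - 1) * \<sigma>) *\<^sub>R Qmat A0 A1 r)"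
  proof (rule sum.mono_neutral_left)
    show "{0..K} \<subseteq> {..<N}"
      using \<open>K < N\<close> by auto
    show "\<forall>r\<in>{..<N} - {0..K}. trunc_pow r (y - (real r - 1) * \<sigma>) *\<^sub>R Qmat A0 A1 r = 0"
      using K by (simp add: not_le)
  qed simp
  finally show ?thesis .
qed

lemma Zmat_mult_eq_delay_kernel:
  assumes "0 < \<sigma>" "y < (real N - 1) * \<sigma>" "A1 ** M = M ** A1"
  shows "Zmat A0 A1 \<sigma> y ** M = delay_kernel (sylvester A0 A1) \<sigma> N y M"
  using assms
  by (simp add: Zmat_eq_trunc_pow_sum delay_kernel_def Qmat_mult_commuting
      bounded_bilinear.sum_left[OF bounded_bilinear_matrix_matrix_mult]
      bounded_bilinear.scaleR_left[OF bounded_bilinear_matrix_matrix_mult])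

lemma commute_vector_derivative:
  fixes f :: "real \<Rightarrow> real^'n^'n"
  assumes ab: "a < b" "x \<in> {a..b}" and f: "(f has_vector_derivative f') (at x within {a..b})"
    and comm: "\<And>s. s \<in> {a..b} \<Longrightarrow> A ** f s = f s ** A"
  shows "A ** f' = f' ** A"
proof -
  have "((\<lambda>s. A ** f s) has_vector_derivative A ** f') (at x within {a..b})"
    by (rule bounded_linear.has_vector_derivative[OF matrix_mult_bounded_linear_right f])
  moreover have "((\<lambda>s. f s ** A) has_vector_derivative f' ** A) (at x within {a..b})"
    by (rule bounded_linear.has_vector_derivative[OF matrix_mult_bounded_linear_left f])
  then have "((\<lambda>s. A ** f s) has_vector_derivative f' ** A) (at x within {a..b})"
    by (rule has_vector_derivative_transform_within[of _ _ _ _ 1]) (use ab comm in auto)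
  ultimately show ?thesis
    by (intro vector_derivative_unique_within_closed_interval[of a b x]) (use ab in auto)
qed

lemma Zmat_formula_eq_delay_kernel:
  fixes A0 A1 :: "real^'d^'d"
  assumes \<sigma>: "0 < \<sigma>" and t: "t < (real N - 1) * \<sigma>"
    and P: "A1 ** P = P ** A1"
    and \<Psi>': "\<And>s. s \<in> {-\<sigma>..0} \<Longrightarrow> A1 ** \<Psi>' s = \<Psi>' s ** A1"
    and G: "\<And>s. 0 \<le> s \<Longrightarrow> A1 ** G s = G s ** A1"
  shows "Zmat A0 A1 \<sigma> t ** P
      + integral {-\<sigma>..0} (\<lambda>s. Zmat A0 A1 \<sigma> (t - \<sigma> - s) ** \<Psi>' s)
      + integral {0..t} (\<lambda>s. Zmat A0 A1 \<sigma> (t - \<sigma> - s) ** (if s < 0 then G 0 else G s))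
    = delay_kernel (sylvester A0 A1) \<sigma> N t P
      + integral {-\<sigma>..0} (\<lambda>s. delay_kernel (sylvester A0 A1) \<sigma> N (t - \<sigma> - s) (\<Psi>' s))
      + integral {0..t} (\<lambda>s. delay_kernel (sylvester A0 A1) \<sigma> N (t - \<sigma> - s) (G s))"
proof -
  have "integral {-\<sigma>..0} (\<lambda>s. Zmat A0 A1 \<sigma> (t - \<sigma> - s) ** \<Psi>' s)
      = integral {-\<sigma>..0} (\<lambda>s. delay_kernel (sylvester A0 A1) \<sigma> N (t - \<sigma> - s) (\<Psi>' s))"
    by (intro integral_cong Zmat_mult_eq_delay_kernel \<sigma> \<Psi>') (use t in auto)
  moreover have "integral {0..t} (\<lambda>s. Zmat A0 A1 \<sigma> (t - \<sigma> - s) ** (if s < 0 then G 0 else G s))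
      = integral {0..t} (\<lambda>s. delay_kernel (sylvester A0 A1) \<sigma> N (t - \<sigma> - s) (G s))"
    by (intro integral_cong) (use t \<sigma> in \<open>auto intro!: Zmat_mult_eq_delay_kernel G\<close>)
  ultimately show ?thesis
    using Zmat_mult_eq_delay_kernel[OF \<sigma> t P] by simp
qed

lemma dde_solution_iff_delay_solution:
  "dde_solution A0 A1 \<sigma> G \<Psi> X \<longleftrightarrow> delay_solution (sylvester A0 A1) \<sigma> G \<Psi> X"
  by (simp add: dde_solution_def delay_solution_def sylvester_def)

lemma delay_equation_sylvester:
  assumes "0 < \<sigma>" "continuous_on {0..} G"
    and "\<And>t. t \<in> {-\<sigma>..0} \<Longrightarrow> (\<Psi> has_vector_derivative \<Psi>' t) (at t within {-\<sigma>..0})"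
  shows "delay_equation (sylvester A0 A1) \<sigma> G \<Psi>"
proof (rule delay_equation.intro[OF bounded_linear_sylvester assms(1,2)])
  show "continuous_on {-\<sigma>..0} \<Psi>"
    using assms(3) has_vector_derivative_continuous continuous_on_eq_continuous_within by blast
qed

lemma dde_solution_representation:
  fixes A0 A1 :: "real^'d^'d"
  assumes \<sigma>: "0 < \<sigma>" and G_cont: "continuous_on {0..} G"
    and G_comm: "\<And>t. 0 \<le> t \<Longrightarrow> A1 ** G t = G t ** A1"
    and \<Psi>': "\<And>t. t \<in> {-\<sigma>..0} \<Longrightarrow> (\<Psi> has_vector_derivative \<Psi>' t) (at t within {-\<sigma>..0})"
    and \<Psi>_comm: "\<And>t. t \<in> {-\<sigma>..0} \<Longrightarrow> A1 ** \<Psi> t = \<Psi> t ** A1"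
    and X: "dde_solution A0 A1 \<sigma> G \<Psi> X" and t: "- \<sigma> \<le> t"
  shows "X t = Zmat A0 A1 \<sigma> t ** \<Psi> (- \<sigma>)
    + integral {-\<sigma>..0} (\<lambda>s. Zmat A0 A1 \<sigma> (t - \<sigma> - s) ** \<Psi>' s)
    + integral {0..t} (\<lambda>s. Zmat A0 A1 \<sigma> (t - \<sigma> - s) ** (if s < 0 then G 0 else G s))"
proof -
  obtain N :: nat where "t / \<sigma> + 1 < real N"
    using reals_Archimedean2 by blast
  then have N: "t < (real N - 1) * \<sigma>"
    using \<sigma> by (simp add: field_simps)
  have "A1 ** \<Psi>' s = \<Psi>' s ** A1" if "s \<in> {-\<sigma>..0}" for s
    by (rule commute_vector_derivative[OF _ that \<Psi>'[OF that] \<Psi>_comm]) (use \<sigma> in auto)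
  moreover have "A1 ** \<Psi> (- \<sigma>) = \<Psi> (- \<sigma>) ** A1"
    using \<sigma> \<Psi>_comm by simp
  ultimately show ?thesis
    using delay_equation.delay_solution_representation[OF delay_equation_sylvester[OF \<sigma> G_cont \<Psi>']
        X[unfolded dde_solution_iff_delay_solution] \<Psi>' t N]
      Zmat_formula_eq_delay_kernel[where \<Psi>' = \<Psi>' and G = G, OF \<sigma> N _ _ G_comm]
    by simp
qed

theorem theorem7:
  fixes A0 A1 :: "real^'d^'d" and \<sigma> :: real
    and G \<Psi> \<Psi>' :: "real \<Rightarrow> real^'d^'d"
  assumes "\<sigma> > 0"
    and "continuous_on {0..} G"
    and "\<And>t. t \<ge> 0 \<Longrightarrow> A1 ** G t = G t ** A1"
    and "\<And>t. t \<in> {-\<sigma>..0} \<Longrightarrow> (\<Psi> has_vector_derivative \<Psi>' t) (at t within {-\<sigma>..0})"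
    and "\<And>t. t \<in> {-\<sigma>..0} \<Longrightarrow> A1 ** \<Psi> t = \<Psi> t ** A1"
  shows "let Gs = (\<lambda>t. if t < 0 then G 0 else G t) in
         \<forall>X. dde_solution A0 A1 \<sigma> G \<Psi> X \<longleftrightarrow>
           (\<forall>t\<ge>-\<sigma>. X t =
              Zmat A0 A1 \<sigma> t ** \<Psi> (-\<sigma>)
              + integral {-\<sigma>..0} (\<lambda>s. Zmat A0 A1 \<sigma> (t - \<sigma> - s) ** \<Psi>' s)
              + integral {0..t} (\<lambda>s. Zmat A0 A1 \<sigma> (t - \<sigma> - s) ** Gs s))"
  unfolding Let_def
proof (intro allI iffI impI)
  fix X t
  assume X: "dde_solution A0 A1 \<sigma> G \<Psi> X" and t: "- \<sigma> \<le> t"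
  show "X t = Zmat A0 A1 \<sigma> t ** \<Psi> (- \<sigma>)
    + integral {-\<sigma>..0} (\<lambda>s. Zmat A0 A1 \<sigma> (t - \<sigma> - s) ** \<Psi>' s)
    + integral {0..t} (\<lambda>s. Zmat A0 A1 \<sigma> (t - \<sigma> - s) ** (if s < 0 then G 0 else G s))"
    using dde_solution_representation[OF assms X t] .
next
  fix X
  assume formula: "\<forall>t\<ge>-\<sigma>. X t = Zmat A0 A1 \<sigma> t ** \<Psi> (- \<sigma>)
    + integral {-\<sigma>..0} (\<lambda>s. Zmat A0 A1 \<sigma> (t - \<sigma> - s) ** \<Psi>' s)
    + integral {0..t} (\<lambda>s. Zmat A0 A1 \<sigma> (t - \<sigma> - s) ** (if s < 0 then G 0 else G s))"
  obtain S where S: "dde_solution A0 A1 \<sigma> G \<Psi> S"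
    using delay_equation.delay_solution_exists[OF delay_equation_sylvester[OF assms(1,2,4)]]
    by (auto simp: dde_solution_iff_delay_solution)
  have "X t = S t" if "- \<sigma> \<le> t" for t
    using formula dde_solution_representation[OF assms S that] that by simp
  with S assms(1) show "dde_solution A0 A1 \<sigma> G \<Psi> X"
    unfolding dde_solution_iff_delay_solution by (auto intro: delay_solution_cong)
qed

end
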